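(* Let $S$ be a finite pseudo-nilpotent semigroup. If $I$ is an ideal of $S$ such that both $I$ and the Rees factor semigroup $S/I$ are nilpotent, then $S$ is nilpotent.
   Context: For a semigroup $S$, $S^1$ denotes $S$ with an identity adjoined (if $S$ has none). For $x,y\in S$ and $z_1,z_2,\ldots\in S^1$ define recursively $\lambda_0=x$, $\rho_0=y$, $\lambda_{n+1}=\lambda_n z_{n+1}\rho_n$, $\rho_{n+1}=\rho_n z_{n+1}\lambda_n$; write $\lambda_n(x,y,z_1,\ldots,z_n)$ and $\rho_n(x,y,z_1,\ldots,z_n)$. A semigroup $S$ is nilpotent (in the sense of Mal'cev) if there is a positive integer $n$ with $\lambda_n(a,b,c_1,\ldots,c_n)=\rho_n(a,b,c_1,\ldots,c_n)$ for all $a,b\in S$ and $c_1,\ldots,c_n\in S^1$. $\langle X\rangle$ denotes the subsemigroup generated by $X$. The upper non-nilpotent graph $\mathcal{N}_S$ has vertex set $S$, with an edge between $x$ and $y$ iff $\langle x,y\rangle$ is not nilpotent. The empty set is regarded as an ideal; for an ideal $I$ of $S$, $S/I$ is the Rees factor semigroup, with $S/\emptyset=S$. A semigroup $S$ is pseudo-nilpotent if the following holds: whenever $x,y\in S$, $w_1,\ldots,w_m\in S^1$, $T$ is the subsemigroup generated by $x,y$ and those $w_i$ lying in $S$, $I$ is an ideal (possibly empty) of $T$, and $t<m$ are non-negative integers such that, writing $\lambda_k=\lambda_k(x,y,w_1,\ldots,w_k)$ and $\rho_k=\rho_k(x,y,w_1,\ldots,w_k)$, one has $\lambda_t\neq\rho_t$,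 $(\lambda_t,\rho_t)=(\lambda_m,\rho_m)$ and $\lambda_m,\rho_m\notin I$, then for every $0\le i\le m$ there is an edge in $\mathcal{N}_{T/I}$ between (the images of) $\lambda_i$ and $\rho_i$. *)

theory Defs
  imports Main
begin

definition sg :: "'a set \<Rightarrow> ('a \<Rightarrow> 'a \<Rightarrow> 'a) \<Rightarrow> bool" where
  "sg S f \<longleftrightarrow> (\<forall>x\<in>S. \<forall>y\<in>S. f x y \<in> S) \<and>
     (\<forall>x\<in>S. \<forall>y\<in>S. \<forall>z\<in>S. f (f x y) z = f x (f y z))"

text \<open>Elements of S^1 are represented as 'a option; None is the adjoined identity.\<close>

definition in_S1 :: "'a set \<Rightarrow> 'a option \<Rightarrow> bool" where
  "in_S1 S z \<longleftrightarrow> set_option z \<subseteq> S"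

fun mul3 :: "('a \<Rightarrow> 'a \<Rightarrow> 'a) \<Rightarrow> 'a \<Rightarrow> 'a option \<Rightarrow> 'a \<Rightarrow> 'a" where
  "mul3 f x None y = f x y"
| "mul3 f x (Some z) y = f (f x z) y"

fun lam_rho :: "('a \<Rightarrow> 'a \<Rightarrow> 'a) \<Rightarrow> 'a \<Rightarrow> 'a \<Rightarrow> (nat \<Rightarrow> 'a option) \<Rightarrow> nat \<Rightarrow> 'a \<times> 'a" where
  "lam_rho f x y z 0 = (x, y)"
| "lam_rho f x y z (Suc n) =
     (let (l, r) = lam_rho f x y z n in (mul3 f l (z (Suc n)) r, mul3 f r (z (Suc n)) l))"

definition lam :: "('a \<Rightarrow> 'a \<Rightarrow> 'a) \<Rightarrow> 'a \<Rightarrow> 'a \<Rightarrow> (nat \<Rightarrow> 'a option) \<Rightarrow> nat \<Rightarrow> 'a" where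
  "lam f x y z n = fst (lam_rho f x y z n)"

definition rho :: "('a \<Rightarrow> 'a \<Rightarrow> 'a) \<Rightarrow> 'a \<Rightarrow> 'a \<Rightarrow> (nat \<Rightarrow> 'a option) \<Rightarrow> nat \<Rightarrow> 'a" where
  "rho f x y z n = snd (lam_rho f x y z n)"

definition malcev_nilpotent :: "'a set \<Rightarrow> ('a \<Rightarrow> 'a \<Rightarrow> 'a) \<Rightarrow> bool" where
  "malcev_nilpotent S f \<longleftrightarrow> (\<exists>n>0. \<forall>a\<in>S. \<forall>b\<in>S. \<forall>c.
      (\<forall>i\<in>{1..n}. in_S1 S (c i)) \<longrightarrow> lam f a b c n = rho f a b c n)"

inductive_set gen :: "('a \<Rightarrow> 'a \<Rightarrow> 'a) \<Rightarrow> 'a set \<Rightarrow> 'a set" for f X where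
  base: "x \<in> X \<Longrightarrow> x \<in> gen f X"
| mult: "a \<in> gen f X \<Longrightarrow> b \<in> gen f X \<Longrightarrow> f a b \<in> gen f X"

text \<open>Two-sided ideals (the empty set is allowed).\<close>

definition sg_ideal :: "'a set \<Rightarrow> ('a \<Rightarrow> 'a \<Rightarrow> 'a) \<Rightarrow> 'a set \<Rightarrow> bool" where
  "sg_ideal S f I \<longleftrightarrow> I \<subseteq> S \<and> (\<forall>x\<in>S. \<forall>i\<in>I. f x i \<in> I \<and> f i x \<in> I)"

text \<open>Rees factor semigroup S/I on 'a option: None is the zero (the class I),
Some x stands for x in S - I. For I empty, S/I is (a copy of) S.\<close>

definition rees_carrier :: "'a set \<Rightarrow> 'a set \<Rightarrow> 'a option set" where
  "rees_carrier S I = (if I = {} then Some ` S else insert None (Some ` (S - I)))"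

fun rees_mult :: "('a \<Rightarrow> 'a \<Rightarrow> 'a) \<Rightarrow> 'a set \<Rightarrow> 'a option \<Rightarrow> 'a option \<Rightarrow> 'a option" where
  "rees_mult f I (Some a) (Some b) = (if f a b \<in> I then None else Some (f a b))"
| "rees_mult f I _ _ = None"

definition rees_img :: "'a set \<Rightarrow> 'a \<Rightarrow> 'a option" where
  "rees_img I x = (if x \<in> I then None else Some x)"

definition nn_edge :: "('a \<Rightarrow> 'a \<Rightarrow> 'a) \<Rightarrow> 'a \<Rightarrow> 'a \<Rightarrow> bool" where
  "nn_edge f x y \<longleftrightarrow> \<not> malcev_nilpotent (gen f {x, y}) f"

definition pseudo_nilpotent :: "'a set \<Rightarrow> ('a \<Rightarrow> 'a \<Rightarrow> 'a) \<Rightarrow> bool" where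
  "pseudo_nilpotent S f \<longleftrightarrow>
    (\<forall>x\<in>S. \<forall>y\<in>S. \<forall>m. \<forall>w. (\<forall>i\<in>{1..m}. in_S1 S (w i)) \<longrightarrow>
      (let T = gen f ({x, y} \<union> (\<Union>i\<in>{1..m}. set_option (w i))) in
       \<forall>I. sg_ideal T f I \<longrightarrow>
       (\<forall>t. t < m \<longrightarrow>
          lam f x y w t \<noteq> rho f x y w t \<longrightarrow>
          (lam f x y w t, rho f x y w t) = (lam f x y w m, rho f x y w m) \<longrightarrow>
          lam f x y w m \<notin> I \<longrightarrow> rho f x y w m \<notin> I \<longrightarrow>
          (\<forall>i\<le>m. nn_edge (rees_mult f I)
                     (rees_img I (lam f x y w i)) (rees_img I (rho f x y w i))))))"

end

theory Submission
  imports Defs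
begin

text \<open>Suppose S is not nilpotent and pick x, y, w with \<lambda>_n \<noteq> \<rho>_n for n = |S|^2 + 1.
By pigeonhole the pairs (\<lambda>_k, \<rho>_k) repeat, giving a cycle t < m along which \<lambda>_k \<noteq> \<rho>_k.
If \<lambda>_m and \<rho>_m both avoid I, pseudo-nilpotency applied with the ideal I \<inter> T of the
subsemigroup T generated by the data yields a non-nilpotent two-generated subsemigroup of
T/(I \<inter> T), which embeds into the nilpotent S/I. Otherwise, one step later both \<lambda> and \<rho> lie
in I; restarting the cycle there and applying pseudo-nilpotency with the empty ideal yields a
non-nilpotent two-generated subsemigroup of the nilpotent I.\<close>

lemma mul3_closed:
  assumes "\<forall>a\<in>A. \<forall>b\<in>A. f a b \<in> A" "l \<in> A" "r \<in> A" "in_S1 A z"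
  shows "mul3 f l z r \<in> A"
  using assms by (cases z) (auto simp: in_S1_def)

lemma mul3_in_ideal:
  assumes "sg S f" "sg_ideal S f I" "p \<in> S" "q \<in> S" "in_S1 S z" "p \<in> I \<or> q \<in> I"
  shows "mul3 f p z q \<in> I"
  using assms by (cases z) (auto simp: sg_def sg_ideal_def in_S1_def)

lemma lam_rho_closed:
  assumes "\<forall>a\<in>A. \<forall>b\<in>A. f a b \<in> A" "x \<in> A" "y \<in> A" "\<forall>i\<in>{1..n}. in_S1 A (w i)"
  shows "lam_rho f x y w n \<in> A \<times> A"
  using assms(4)
proof (induction n)
  case 0
  then show ?case using assms(2,3) by simp
next
  case (Suc n)
  then show ?case using assms(1) by (auto simp: split_beta intro!: mul3_closed)
qed

lemma lam_rho_add:
  "lam_rho f x y w (k + j) =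
   lam_rho f (fst (lam_rho f x y w k)) (snd (lam_rho f x y w k)) (\<lambda>i. w (k + i)) j"
  by (induction j) (simp_all add: split_beta)

lemma lam_rho_cong:
  "\<forall>i\<in>{1..n}. w i = w' i \<Longrightarrow> lam_rho f x y w n = lam_rho f x y w' n"
  by (induction n) (auto simp: split_beta)

lemma lam_rho_diagonal: "fst (lam_rho f x x w n) = snd (lam_rho f x x w n)"
  by (induction n) (auto simp: split_beta)

lemma lam_rho_neq_le:
  assumes "k \<le> n" "fst (lam_rho f x y w n) \<noteq> snd (lam_rho f x y w n)"
  shows "fst (lam_rho f x y w k) \<noteq> snd (lam_rho f x y w k)"
proof
  assume eq: "fst (lam_rho f x y w k) = snd (lam_rho f x y w k)"
  have "lam_rho f x y w n = lam_rho f x y w (k + (n - k))"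
    using assms(1) by simp
  also have "\<dots> = lam_rho f (fst (lam_rho f x y w k)) (fst (lam_rho f x y w k)) (\<lambda>i. w (k + i)) (n - k)"
    using eq by (simp add: lam_rho_add)
  finally show False
    using assms(2) lam_rho_diagonal by metis
qed

lemma lam_rho_rotate:
  assumes "t < m" "lam_rho f x y w t = lam_rho f x y w m"
  defines "p \<equiv> lam_rho f x y w (Suc t)"
  shows "lam_rho f (fst p) (snd p) (\<lambda>i. w (Suc t + i mod (m - t))) (m - t) = p"
proof -
  define P where "P = m - t"
  have P: "P = Suc (P - 1)"
    using assms(1) by (simp add: P_def)
  have "lam_rho f (fst p) (snd p) (\<lambda>i. w (Suc t + i mod P)) (P - 1)
      = lam_rho f (fst p) (snd p) (\<lambda>i. w (Suc t + i)) (P - 1)"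
    by (rule lam_rho_cong) (auto simp: P_def)
  also have "\<dots> = lam_rho f x y w t"
    using lam_rho_add[of f x y w "Suc t" "P - 1"] assms(1,2) by (simp add: p_def P_def)
  moreover have "Suc (P - 1) mod P = 0"
    using P by (metis mod_self)
  ultimately have "lam_rho f (fst p) (snd p) (\<lambda>i. w (Suc t + i mod P)) (Suc (P - 1)) = p"
    by (simp add: p_def split_beta)
  then show ?thesis
    using P by (simp add: P_def)
qed

lemma lam_rho_hom:
  assumes closed: "\<forall>a\<in>A. \<forall>b\<in>A. f a b \<in> A"
    and hom: "\<forall>a\<in>A. \<forall>b\<in>A. h (f a b) = g (h a) (h b)"
    and "x \<in> A" "y \<in> A" "\<forall>i\<in>{1..n}. in_S1 A (c i)"
  shows "lam_rho g (h x) (h y) (\<lambda>i. map_option h (c i)) n = map_prod h h (lam_rho f x y c n)"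
  using assms(5)
proof (induction n)
  case 0
  then show ?case by simp
next
  case (Suc n)
  obtain l r where lr: "lam_rho f x y c n = (l, r)"
    by (cases "lam_rho f x y c n")
  have IH: "lam_rho g (h x) (h y) (\<lambda>i. map_option h (c i)) n = (h l, h r)"
    using Suc lr by simp
  have "l \<in> A" "r \<in> A" "in_S1 A (c (Suc n))"
    using lam_rho_closed[OF closed assms(3,4), of n c] lr Suc.prems by auto
  then show ?case
    using IH lr hom closed by (cases "c (Suc n)") (simp_all add: in_S1_def)
qed

lemma malcev_nilpotent_inj_hom:
  assumes closed: "\<forall>a\<in>A. \<forall>b\<in>A. f a b \<in> A"
    and hom: "\<forall>a\<in>A. \<forall>b\<in>A. h (f a b) = g (h a) (h b)"
    and inj: "inj_on h A" and into: "h ` A \<subseteq> B"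
    and nil: "malcev_nilpotent B g"
  shows "malcev_nilpotent A f"
proof -
  obtain n where "n > 0" and nB: "\<forall>a\<in>B. \<forall>b\<in>B. \<forall>c.
      (\<forall>i\<in>{1..n}. in_S1 B (c i)) \<longrightarrow> lam g a b c n = rho g a b c n"
    using nil unfolding malcev_nilpotent_def by blast
  moreover have "lam f a b c n = rho f a b c n"
    if a: "a \<in> A" and b: "b \<in> A" and c: "\<forall>i\<in>{1..n}. in_S1 A (c i)" for a b c
  proof -
    have "\<forall>i\<in>{1..n}. in_S1 B (map_option h (c i))"
      using c into by (force simp: in_S1_def option.set_map)
    moreover have "h a \<in> B" "h b \<in> B"
      using a b into by auto
    ultimately have "lam g (h a) (h b) (\<lambda>i. map_option h (c i)) n
             = rho g (h a) (h b) (\<lambda>i. map_option h (c i)) n"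
      using nB by simp
    then have "h (lam f a b c n) = h (rho f a b c n)"
      using lam_rho_hom[OF closed hom a b c] by (simp add: lam_def rho_def map_prod_def split_beta)
    moreover have "lam f a b c n \<in> A" "rho f a b c n \<in> A"
      using lam_rho_closed[OF closed a b c] by (auto simp: lam_def rho_def)
    ultimately show ?thesis
      using inj by (simp add: inj_on_def)
  qed
  ultimately show ?thesis
    unfolding malcev_nilpotent_def by blast
qed

lemma malcev_nilpotent_subset:
  assumes "A \<subseteq> B" "malcev_nilpotent B f"
  shows "malcev_nilpotent A f"
proof -
  obtain n where "n > 0" and nB: "\<forall>a\<in>B. \<forall>b\<in>B. \<forall>c.
      (\<forall>i\<in>{1..n}. in_S1 B (c i)) \<longrightarrow> lam f a b c n = rho f a b c n"
    using assms(2) unfolding malcev_nilpotent_def by blast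
  moreover have "in_S1 B z" if "in_S1 A z" for z
    using that assms(1) by (auto simp: in_S1_def)
  ultimately show ?thesis
    using assms(1) unfolding malcev_nilpotent_def by (meson subsetD)
qed

lemma gen_subset_closed:
  assumes "X \<subseteq> A" "\<forall>a\<in>A. \<forall>b\<in>A. f a b \<in> A"
  shows "gen f X \<subseteq> A"
proof
  fix x
  assume "x \<in> gen f X"
  then show "x \<in> A"
    by induction (use assms in auto)
qed

lemma gen_closed: "\<forall>a\<in>gen f X. \<forall>b\<in>gen f X. f a b \<in> gen f X"
  by (auto intro: gen.mult)

lemma malcev_nilpotent_no_edge:
  assumes "\<forall>a\<in>A. \<forall>b\<in>A. g a b \<in> A" "malcev_nilpotent A g" "p \<in> A" "q \<in> A"
  shows "\<not> nn_edge g p q"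
proof -
  have "gen g {p, q} \<subseteq> A"
    using assms(1,3,4) by (intro gen_subset_closed) auto
  then show ?thesis
    using assms(2) unfolding nn_edge_def by (simp add: malcev_nilpotent_subset)
qed

lemma lam_rho_Suc_in_ideal:
  assumes "sg S f" "sg_ideal S f I" "x \<in> S" "y \<in> S" "\<forall>i\<in>{1..Suc n}. in_S1 S (w i)"
    and "fst (lam_rho f x y w n) \<in> I \<or> snd (lam_rho f x y w n) \<in> I"
  shows "lam_rho f x y w (Suc n) \<in> I \<times> I"
proof -
  obtain l r where lr: "lam_rho f x y w n = (l, r)"
    by fastforce
  have "lam_rho f x y w n \<in> S \<times> S"
    using assms(1,3-5) by (intro lam_rho_closed) (auto simp: sg_def)
  moreover have "in_S1 S (w (Suc n))"
    using assms(5) by simp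
  ultimately show ?thesis
    using assms(1,2,6) lr by (auto intro!: mul3_in_ideal)
qed

lemma rees_carrier_closed:
  assumes "\<forall>a\<in>T. \<forall>b\<in>T. f a b \<in> T" "sg_ideal T f J"
  shows "\<forall>p\<in>rees_carrier T J. \<forall>q\<in>rees_carrier T J. rees_mult f J p q \<in> rees_carrier T J"
  using assms by (auto simp: rees_carrier_def sg_ideal_def)

lemma rees_img_in_carrier: "x \<in> T \<Longrightarrow> rees_img J x \<in> rees_carrier T J"
  by (auto simp: rees_img_def rees_carrier_def)

lemma malcev_nilpotent_rees_restrict:
  assumes "T \<subseteq> S" "\<forall>a\<in>T. \<forall>b\<in>T. f a b \<in> T" "sg_ideal S f I"
    and "malcev_nilpotent (rees_carrier S I) (rees_mult f I)"
  shows "malcev_nilpotent (rees_carrier T (I \<inter> T)) (rees_mult f (I \<inter> T))"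
proof (rule malcev_nilpotent_inj_hom[where h = id])
  have "sg_ideal T f (I \<inter> T)"
    using assms(1-3) by (auto simp: sg_ideal_def)
  then show "\<forall>p\<in>rees_carrier T (I \<inter> T). \<forall>q\<in>rees_carrier T (I \<inter> T).
      rees_mult f (I \<inter> T) p q \<in> rees_carrier T (I \<inter> T)"
    using assms(2) by (rule rees_carrier_closed[rotated])
  show "\<forall>p\<in>rees_carrier T (I \<inter> T). \<forall>q\<in>rees_carrier T (I \<inter> T).
      id (rees_mult f (I \<inter> T) p q) = rees_mult f I (id p) (id q)"
  proof (intro ballI)
    fix p q
    assume "p \<in> rees_carrier T (I \<inter> T)" "q \<in> rees_carrier T (I \<inter> T)"
    then show "id (rees_mult f (I \<inter> T) p q) = rees_mult f I (id p) (id q)"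
      using assms(2) by (cases p; cases q) (auto simp: rees_carrier_def split: if_splits)
  qed
  show "id ` rees_carrier T (I \<inter> T) \<subseteq> rees_carrier S I"
    using assms(1) by (auto simp: rees_carrier_def)
qed (use assms(4) in simp_all)

lemma nn_edge_rees_empty:
  assumes "nn_edge (rees_mult f {}) (Some x) (Some y)"
  shows "nn_edge f x y"
  unfolding nn_edge_def
proof
  assume nilpotent: "malcev_nilpotent (gen f {x, y}) f"
  let ?G = "Some ` gen f {x, y}"
  have closed: "\<forall>p\<in>?G. \<forall>q\<in>?G. rees_mult f {} p q \<in> ?G"
    by (auto intro: gen.mult)
  have "malcev_nilpotent ?G (rees_mult f {})"
    by (rule malcev_nilpotent_inj_hom[OF closed _ _ _ nilpotent, where h = the])
      (auto simp: inj_on_def)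
  moreover have "gen (rees_mult f {}) {Some x, Some y} \<subseteq> ?G"
    using closed by (intro gen_subset_closed) (auto intro: gen.base)
  ultimately show False
    using assms malcev_nilpotent_subset unfolding nn_edge_def by blast
qed

lemma not_malcev_nilpotent_obtain_cycle:
  assumes closed: "\<forall>a\<in>S. \<forall>b\<in>S. f a b \<in> S" and "finite S" and "\<not> malcev_nilpotent S f"
  obtains x y w t m where "x \<in> S" "y \<in> S" "\<forall>i\<in>{1..m}. in_S1 S (w i)" "t < m"
    "lam_rho f x y w t = lam_rho f x y w m"
    "\<forall>k\<le>m. fst (lam_rho f x y w k) \<noteq> snd (lam_rho f x y w k)"
proof -
  define n where "n = Suc (card (S \<times> S))"
  obtain x y w where xy: "x \<in> S" "y \<in> S" and w: "\<forall>i\<in>{1..n}. in_S1 S (w i)"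
    and distinct: "lam f x y w n \<noteq> rho f x y w n"
    using assms(3) unfolding malcev_nilpotent_def n_def by blast
  have "\<not> inj_on (lam_rho f x y w) {0..n}"
  proof
    assume inj: "inj_on (lam_rho f x y w) {0..n}"
    have "lam_rho f x y w k \<in> S \<times> S" if "k \<le> n" for k
      using w that by (intro lam_rho_closed[OF closed xy]) auto
    then have "lam_rho f x y w ` {0..n} \<subseteq> S \<times> S"
      by (simp add: image_subset_iff)
    then have "card {0..n} \<le> card (S \<times> S)"
      using assms(2) by (intro card_inj_on_le[OF inj]) auto
    then show False
      by (simp add: n_def)
  qed
  then obtain k l where "k \<le> n" "l \<le> n" "k < l" "lam_rho f x y w k = lam_rho f x y w l"
    unfolding inj_on_def by (metis atLeastAtMost_iff le0 linorder_neq_iff)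
  moreover have "\<forall>j\<le>l. fst (lam_rho f x y w j) \<noteq> snd (lam_rho f x y w j)"
    using distinct \<open>l \<le> n\<close> by (simp add: lam_rho_neq_le lam_def rho_def)
  moreover have "\<forall>i\<in>{1..l}. in_S1 S (w i)"
    using w \<open>l \<le> n\<close> by simp
  ultimately show ?thesis
    using that[OF xy] by blast
qed

lemma pseudo_nilpotentD:
  assumes "pseudo_nilpotent S f" "x \<in> S" "y \<in> S" "\<forall>i\<in>{1..m}. in_S1 S (w i)"
    and "sg_ideal (gen f ({x, y} \<union> (\<Union>i\<in>{1..m}. set_option (w i)))) f J"
    and "t < m" "lam f x y w t \<noteq> rho f x y w t"
    and "(lam f x y w t, rho f x y w t) = (lam f x y w m, rho f x y w m)"
    and "lam f x y w m \<notin> J" "rho f x y w m \<notin> J" "i \<le> m"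
  shows "nn_edge (rees_mult f J) (rees_img J (lam f x y w i)) (rees_img J (rho f x y w i))"
  using assms unfolding pseudo_nilpotent_def Let_def by blast

lemma cycle_meets_ideal:
  assumes "sg S f" "pseudo_nilpotent S f" "sg_ideal S f I"
    and "malcev_nilpotent (rees_carrier S I) (rees_mult f I)"
    and "x \<in> S" "y \<in> S" "\<forall>i\<in>{1..m}. in_S1 S (w i)" "t < m"
    and "lam f x y w t \<noteq> rho f x y w t" "lam_rho f x y w t = lam_rho f x y w m"
  shows "lam f x y w m \<in> I \<or> rho f x y w m \<in> I"
proof (rule ccontr)
  assume outside: "\<not> (lam f x y w m \<in> I \<or> rho f x y w m \<in> I)"
  define T where "T = gen f ({x, y} \<union> (\<Union>i\<in>{1..m}. set_option (w i)))"
  define J where "J = I \<inter> T"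
  have T_closed: "\<forall>a\<in>T. \<forall>b\<in>T. f a b \<in> T"
    unfolding T_def by (rule gen_closed)
  have "T \<subseteq> S"
    unfolding T_def using assms(1,5-7) by (intro gen_subset_closed) (auto simp: sg_def in_S1_def)
  then have ideal: "sg_ideal T f J"
    using assms(3) T_closed by (auto simp: sg_ideal_def J_def)
  have edge: "nn_edge (rees_mult f J) (rees_img J (lam f x y w m)) (rees_img J (rho f x y w m))"
    by (rule pseudo_nilpotentD[OF assms(2,5-7) ideal[unfolded T_def] assms(8,9)])
      (use assms(10) outside in \<open>simp_all add: lam_def rho_def J_def\<close>)
  have "x \<in> T" "y \<in> T" "\<forall>i\<in>{1..m}. in_S1 T (w i)"
    by (auto simp: T_def in_S1_def intro: gen.base)
  then have "lam_rho f x y w m \<in> T \<times> T"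
    by (rule lam_rho_closed[OF T_closed])
  then have "rees_img J (lam f x y w m) \<in> rees_carrier T J" "rees_img J (rho f x y w m) \<in> rees_carrier T J"
    by (auto simp: lam_def rho_def intro: rees_img_in_carrier)
  moreover have "malcev_nilpotent (rees_carrier T J) (rees_mult f J)"
    unfolding J_def using \<open>T \<subseteq> S\<close> T_closed assms(3,4) by (rule malcev_nilpotent_rees_restrict)
  ultimately show False
    using edge malcev_nilpotent_no_edge[OF rees_carrier_closed[OF T_closed ideal]] by blast
qed

lemma cycle_in_nilpotent_ideal_diagonal:
  assumes "sg S f" "pseudo_nilpotent S f" "sg_ideal S f I" "malcev_nilpotent I f"
    and "x \<in> I" "y \<in> I" "\<forall>i\<in>{1..P}. in_S1 S (w i)" "0 < P" "lam_rho f x y w P = (x, y)"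
  shows "x = y"
proof (rule ccontr)
  assume "x \<noteq> y"
  have "x \<in> S" "y \<in> S"
    using assms(3,5,6) by (auto simp: sg_ideal_def)
  moreover have "sg_ideal (gen f ({x, y} \<union> (\<Union>i\<in>{1..P}. set_option (w i)))) f {}"
    by (simp add: sg_ideal_def)
  moreover have "lam f x y w 0 \<noteq> rho f x y w 0"
    using \<open>x \<noteq> y\<close> by (simp add: lam_def rho_def)
  moreover have "(lam f x y w 0, rho f x y w 0) = (lam f x y w P, rho f x y w P)"
    using assms(9) by (simp add: lam_def rho_def)
  ultimately have "nn_edge (rees_mult f {}) (rees_img {} (lam f x y w 0)) (rees_img {} (rho f x y w 0))"
    using pseudo_nilpotentD[OF assms(2) _ _ assms(7) _ assms(8)] by blast
  then have "nn_edge (rees_mult f {}) (Some x) (Some y)"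
    by (simp add: lam_def rho_def rees_img_def)
  then have "nn_edge f x y"
    by (rule nn_edge_rees_empty)
  moreover have "\<forall>a\<in>I. \<forall>b\<in>I. f a b \<in> I"
    using assms(3) by (auto simp: sg_ideal_def)
  ultimately show False
    using malcev_nilpotent_no_edge[OF _ assms(4-6)] by blast
qed

theorem lemma2p3:
  fixes S :: "'a set" and f :: "'a \<Rightarrow> 'a \<Rightarrow> 'a" and I :: "'a set"
  assumes "sg S f" and "finite S" and "pseudo_nilpotent S f"
    and "sg_ideal S f I"
    and "malcev_nilpotent I f"
    and "malcev_nilpotent (rees_carrier S I) (rees_mult f I)"
  shows "malcev_nilpotent S f"
proof (rule ccontr)
  assume not_nilpotent: "\<not> malcev_nilpotent S f"
  have closed: "\<forall>a\<in>S. \<forall>b\<in>S. f a b \<in> S"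
    using assms(1) by (simp add: sg_def)
  obtain x y w t m where xy: "x \<in> S" "y \<in> S" and w: "\<forall>i\<in>{1..m}. in_S1 S (w i)"
    and "t < m" and cycle: "lam_rho f x y w t = lam_rho f x y w m"
    and distinct: "\<forall>k\<le>m. fst (lam_rho f x y w k) \<noteq> snd (lam_rho f x y w k)"
    by (rule not_malcev_nilpotent_obtain_cycle[OF closed assms(2) not_nilpotent])
  define p where "p = lam_rho f x y w (Suc t)"
  have "lam f x y w m \<in> I \<or> rho f x y w m \<in> I"
    using \<open>t < m\<close> distinct cycle
    by (intro cycle_meets_ideal[OF assms(1,3,4,6) xy w \<open>t < m\<close>]) (auto simp: lam_def rho_def)
  then have "p \<in> I \<times> I"
    unfolding p_def using \<open>t < m\<close> w cycle
    by (intro lam_rho_Suc_in_ideal[OF assms(1,4) xy]) (auto simp: lam_def rho_def)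
  moreover have "in_S1 S (w (Suc t + i mod (m - t)))" for i
  proof -
    have "i mod (m - t) < m - t"
      using \<open>t < m\<close> by simp
    then show ?thesis
      using w by simp
  qed
  moreover have "lam_rho f (fst p) (snd p) (\<lambda>i. w (Suc t + i mod (m - t))) (m - t) = p"
    unfolding p_def using \<open>t < m\<close> cycle by (rule lam_rho_rotate)
  ultimately have "fst p = snd p"
    using \<open>t < m\<close> by (intro cycle_in_nilpotent_ideal_diagonal[OF assms(1,3-5)]) auto
  moreover have "fst p \<noteq> snd p"
    unfolding p_def by (rule distinct[rule_format, OF Suc_leI[OF \<open>t < m\<close>]])
  ultimately show False
    by simp
qed

end
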